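(* Every tree admits a canonical dominating set.
   Context: A set $D\subseteq V(G)$ is a dominating set if every vertex of $G$ is in $D$ or adjacent to a vertex of $D$. Two dominating sets $D,D'$ are adjacent if $|D\triangle D'|=1$. For dominating sets $D_p,D_q$ and an integer $k>0$, write $D_p\leftrightarrow_k D_q$ if there is a sequence $D_0=D_p,\dots,D_\ell=D_q$ ($\ell\ge0$) of dominating sets of $G$ with consecutive sets adjacent and $|D_i|\le k$ for all $i$. A minimum dominating set $D^*$ of $G$ is canonical if $D\leftrightarrow_{|D|+1} D^*$ for every dominating set $D$ of $G$. *)

theory Defs
  imports Main
begin

definition simple_graph :: "'a set \<Rightarrow> ('a \<Rightarrow> 'a \<Rightarrow> bool) \<Rightarrow> bool" where
  "simple_graph V E \<longleftrightarrow> finite V \<and> (\<forall>u v. E u v \<longrightarrow> u \<in> V \<and> v \<in> V)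
     \<and> (\<forall>u v. E u v \<longrightarrow> E v u) \<and> (\<forall>v. \<not> E v v)"

definition is_walk :: "'a set \<Rightarrow> ('a \<Rightarrow> 'a \<Rightarrow> bool) \<Rightarrow> 'a list \<Rightarrow> bool" where
  "is_walk V E p \<longleftrightarrow> p \<noteq> [] \<and> set p \<subseteq> V \<and> (\<forall>i. Suc i < length p \<longrightarrow> E (p ! i) (p ! Suc i))"

definition connected_graph :: "'a set \<Rightarrow> ('a \<Rightarrow> 'a \<Rightarrow> bool) \<Rightarrow> bool" where
  "connected_graph V E \<longleftrightarrow> (\<forall>u\<in>V. \<forall>v\<in>V. \<exists>p. is_walk V E p \<and> hd p = u \<and> last p = v)"

definition is_cycle :: "'a set \<Rightarrow> ('a \<Rightarrow> 'a \<Rightarrow> bool) \<Rightarrow> 'a list \<Rightarrow> bool" where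
  "is_cycle V E c \<longleftrightarrow> length c \<ge> 3 \<and> distinct c \<and> is_walk V E c \<and> E (last c) (hd c)"

definition is_tree :: "'a set \<Rightarrow> ('a \<Rightarrow> 'a \<Rightarrow> bool) \<Rightarrow> bool" where
  "is_tree V E \<longleftrightarrow> simple_graph V E \<and> V \<noteq> {} \<and> connected_graph V E \<and> (\<nexists>c. is_cycle V E c)"

definition dominating_set :: "'a set \<Rightarrow> ('a \<Rightarrow> 'a \<Rightarrow> bool) \<Rightarrow> 'a set \<Rightarrow> bool" where
  "dominating_set V E D \<longleftrightarrow> D \<subseteq> V \<and> (\<forall>v\<in>V. v \<in> D \<or> (\<exists>u\<in>D. E u v))"

definition ds_adjacent :: "'a set \<Rightarrow> 'a set \<Rightarrow> bool" where
  "ds_adjacent D D' \<longleftrightarrow> card ((D - D') \<union> (D' - D)) = 1"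

definition reconf :: "'a set \<Rightarrow> ('a \<Rightarrow> 'a \<Rightarrow> bool) \<Rightarrow> nat \<Rightarrow> 'a set \<Rightarrow> 'a set \<Rightarrow> bool" where
  "reconf V E k Dp Dq \<longleftrightarrow> (\<exists>Ds. Ds \<noteq> [] \<and> hd Ds = Dp \<and> last Ds = Dq
     \<and> (\<forall>D\<in>set Ds. dominating_set V E D \<and> card D \<le> k)
     \<and> (\<forall>i. Suc i < length Ds \<longrightarrow> ds_adjacent (Ds ! i) (Ds ! Suc i)))"

definition min_dominating_set :: "'a set \<Rightarrow> ('a \<Rightarrow> 'a \<Rightarrow> bool) \<Rightarrow> 'a set \<Rightarrow> bool" where
  "min_dominating_set V E D \<longleftrightarrow> dominating_set V E D \<and>
     (\<forall>D'. dominating_set V E D' \<longrightarrow> card D \<le> card D')"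

definition canonical_dominating_set :: "'a set \<Rightarrow> ('a \<Rightarrow> 'a \<Rightarrow> bool) \<Rightarrow> 'a set \<Rightarrow> bool" where
  "canonical_dominating_set V E Ds \<longleftrightarrow> min_dominating_set V E Ds \<and>
     (\<forall>D. dominating_set V E D \<longrightarrow> reconf V E (card D + 1) D Ds)"

end

theory Submission
  imports Defs
begin

text \<open>
  We prove more: in every finite graph in which each nonempty vertex set contains a vertex
  with at most one neighbour inside it (e.g. every forest), each set R of target vertices
  has a canonical dominating set, where "dominating" only asks to dominate R.
  Induct on the number of vertices and pick such a pendant vertex u, with neighbour c
  (or c = u if u is isolated).
  If u is not a target, any dominating set can trade u for c without growing, so the
  canonical set of the graph without u is canonical.
  If u is a target, every dominating set meets {u, c} and may as well contain c; deleting
  u and c, and dropping the targets c dominates, gives a smaller instance whose canonical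
  set plus c is canonical, because reconfiguration sequences of the smaller instance lift
  by adding c to every set.
\<close>

definition dominates :: "'a set \<Rightarrow> ('a \<Rightarrow> 'a \<Rightarrow> bool) \<Rightarrow> 'a set \<Rightarrow> 'a set \<Rightarrow> bool" where
  "dominates V E R D \<longleftrightarrow> D \<subseteq> V \<and> (\<forall>v\<in>R. v \<in> D \<or> (\<exists>u\<in>D. E u v))"

lemma dominates_self_iff: "dominates V E V D \<longleftrightarrow> dominating_set V E D"
  unfolding dominates_def dominating_set_def by simp

lemma dominates_mono_vertices: "dominates W E R A \<Longrightarrow> W \<subseteq> V \<Longrightarrow> dominates V E R A"
  unfolding dominates_def by blast

lemma ds_adjacent_sym: "ds_adjacent A B \<Longrightarrow> ds_adjacent B A"
  unfolding ds_adjacent_def by (simp add: Un_commute)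

lemma ds_adjacent_insert: "x \<notin> A \<Longrightarrow> ds_adjacent A (insert x A)"
proof -
  assume "x \<notin> A"
  then have "(A - insert x A) \<union> (insert x A - A) = {x}" by auto
  then show ?thesis unfolding ds_adjacent_def by simp
qed

lemma ds_adjacent_insert_both:
  assumes "c \<notin> X" "c \<notin> Y" "ds_adjacent X Y"
  shows "ds_adjacent (insert c X) (insert c Y)"
proof -
  have "(insert c X - insert c Y) \<union> (insert c Y - insert c X) = (X - Y) \<union> (Y - X)"
    using assms(1,2) by auto
  then show ?thesis using assms(3) unfolding ds_adjacent_def by simp
qed

inductive reconf_within :: "'a set \<Rightarrow> ('a \<Rightarrow> 'a \<Rightarrow> bool) \<Rightarrow> 'a set \<Rightarrow> nat \<Rightarrow> 'a set \<Rightarrow> 'a set \<Rightarrow> bool"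
  for V E R k where
  refl: "dominates V E R A \<Longrightarrow> card A \<le> k \<Longrightarrow> reconf_within V E R k A A"
| step: "reconf_within V E R k A B \<Longrightarrow> ds_adjacent B C \<Longrightarrow> dominates V E R C \<Longrightarrow> card C \<le> k
    \<Longrightarrow> reconf_within V E R k A C"

lemma reconf_within_trans:
  assumes "reconf_within V E R k A B" "reconf_within V E R k B C"
  shows "reconf_within V E R k A C"
  using assms(2,1) by (induction rule: reconf_within.induct) (auto intro: reconf_within.step)

lemma reconf_within_target:
  "reconf_within V E R k A B \<Longrightarrow> dominates V E R B \<and> card B \<le> k"
  by (induction rule: reconf_within.induct) auto

lemma reconf_within_mono:
  assumes "reconf_within W E R k A B" "W \<subseteq> V" "k \<le> k'"
  shows "reconf_within V E R k' A B"
  using assms(1)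
proof (induction rule: reconf_within.induct)
  case (refl A)
  have "dominates V E R A" using refl.hyps(1) assms(2) by (rule dominates_mono_vertices)
  then show ?case using refl.hyps(2) assms(3) by (intro reconf_within.refl) auto
next
  case (step A B C)
  have "dominates V E R C" using step.hyps(3) assms(2) by (rule dominates_mono_vertices)
  then show ?case using reconf_within.step[OF step.IH step.hyps(2)] step.hyps(4) assms(3) by simp
qed

lemma reconf_within_map:
  assumes "reconf_within V E R k A B"
    and "\<And>T. dominates V E R T \<Longrightarrow> card T \<le> k \<Longrightarrow> dominates V' E R' (f T) \<and> card (f T) \<le> k'"
    and "\<And>X Y. dominates V E R X \<Longrightarrow> dominates V E R Y \<Longrightarrow> ds_adjacent X Y \<Longrightarrow> ds_adjacent (f X) (f Y)"
  shows "reconf_within V' E R' k' (f A) (f B)"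
  using assms(1)
proof (induction rule: reconf_within.induct)
  case (refl A)
  then show ?case using assms(2) reconf_within.refl by blast
next
  case (step A B C)
  have "dominates V E R B" using reconf_within_target[OF step.hyps(1)] by blast
  then have "ds_adjacent (f B) (f C)" using assms(3) step.hyps(2,3) by blast
  moreover have "dominates V' E R' (f C) \<and> card (f C) \<le> k'" using assms(2) step.hyps(3,4) by blast
  ultimately show ?case by (intro reconf_within.step[OF step.IH]) auto
qed

lemma reconf_within_insert:
  assumes "dominates V E R A" "x \<in> V" "x \<notin> A" "card (insert x A) \<le> k"
  shows "reconf_within V E R k A (insert x A)" "reconf_within V E R k (insert x A) A"
proof -
  have card_A: "card A \<le> k"
    using assms(3,4) by (cases "finite A") auto
  have dom: "dominates V E R (insert x A)"
    using assms(1,2) unfolding dominates_def by blast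
  have refl_A: "reconf_within V E R k A A" and refl_xA: "reconf_within V E R k (insert x A) (insert x A)"
    using assms(1,4) dom card_A by (simp_all add: reconf_within.refl)
  show "reconf_within V E R k A (insert x A)"
    using reconf_within.step[OF refl_A ds_adjacent_insert[OF assms(3)] dom assms(4)] .
  show "reconf_within V E R k (insert x A) A"
    using reconf_within.step[OF refl_xA ds_adjacent_sym[OF ds_adjacent_insert[OF assms(3)]] assms(1)
        card_A] .
qed

lemma reconf_within_grow_shrink:
  assumes "finite V" "dominates V E R A" "finite X" "A \<inter> X = {}" "A \<union> X \<subseteq> V"
    "card (A \<union> X) \<le> k"
  shows "reconf_within V E R k A (A \<union> X) \<and> reconf_within V E R k (A \<union> X) A"
  using assms(3-6)
proof (induct X rule: finite_induct)
  case empty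
  then have "card A \<le> k" by simp
  then have "reconf_within V E R k A A" by (rule reconf_within.refl[OF assms(2)])
  then show ?case by (simp only: Un_empty_right)
next
  case (insert x X)
  have "finite (A \<union> insert x X)" using finite_subset[OF insert.prems(2) assms(1)] .
  then have "card (A \<union> X) \<le> card (A \<union> insert x X)" by (intro card_mono) auto
  then have IH: "reconf_within V E R k A (A \<union> X) \<and> reconf_within V E R k (A \<union> X) A"
    using insert.hyps(3) insert.prems by auto
  have dom: "dominates V E R (A \<union> X)"
    using assms(2) insert.prems(2) unfolding dominates_def by blast
  have x: "x \<in> V" "x \<notin> A \<union> X" using insert.hyps(2) insert.prems(1,2) by auto
  have "card (insert x (A \<union> X)) \<le> k" using insert.prems(3) by simp
  note steps = reconf_within_insert[OF dom x this]
  have "A \<union> insert x X = insert x (A \<union> X)" by simp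
  then show ?case using IH steps reconf_within_trans by metis
qed

lemma reconf_within_via_superset:
  assumes "finite V" "dominates V E R A" "dominates V E R B" "A \<subseteq> C" "B \<subseteq> C" "C \<subseteq> V"
    "card C \<le> k"
  shows "reconf_within V E R k A B"
proof -
  have fin: "finite (C - A)" "finite (C - B)" using finite_subset[OF assms(6,1)] by auto
  have AC: "A \<union> (C - A) = C" "A \<inter> (C - A) = {}" and BC: "B \<union> (C - B) = C" "B \<inter> (C - B) = {}"
    using assms(4,5) by auto
  have "reconf_within V E R k A C"
    using reconf_within_grow_shrink[OF assms(1,2) fin(1) AC(2)] assms(6,7) unfolding AC(1) by blast
  moreover have "reconf_within V E R k C B"
    using reconf_within_grow_shrink[OF assms(1,3) fin(2) BC(2)] assms(6,7) unfolding BC(1) by blast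
  ultimately show ?thesis by (rule reconf_within_trans)
qed

definition canonical_within :: "'a set \<Rightarrow> ('a \<Rightarrow> 'a \<Rightarrow> bool) \<Rightarrow> 'a set \<Rightarrow> 'a set \<Rightarrow> bool" where
  "canonical_within V E R D \<longleftrightarrow> dominates V E R D
     \<and> (\<forall>S. dominates V E R S \<longrightarrow> card D \<le> card S)
     \<and> (\<forall>S. dominates V E R S \<longrightarrow> reconf_within V E R (card S + 1) S D)"

lemma canonical_within_empty: "canonical_within {} E {} {}"
proof -
  have dom: "dominates {} E {} S \<longleftrightarrow> S = {}" for S by (auto simp: dominates_def)
  show ?thesis unfolding canonical_within_def dom using reconf_within.refl[of "{}" E "{}" "{}"] dom
    by simp
qed

definition one_degenerate :: "'a set \<Rightarrow> ('a \<Rightarrow> 'a \<Rightarrow> bool) \<Rightarrow> bool" where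
  "one_degenerate V E \<longleftrightarrow>
     (\<forall>W\<subseteq>V. W \<noteq> {} \<longrightarrow> (\<exists>u\<in>W. \<forall>a\<in>W. \<forall>b\<in>W. E u a \<longrightarrow> E u b \<longrightarrow> a = b))"

lemma one_degenerate_subset: "one_degenerate V E \<Longrightarrow> W \<subseteq> V \<Longrightarrow> one_degenerate W E"
  unfolding one_degenerate_def by (meson subset_trans)

locale pendant_vertex =
  fixes V :: "'a set" and E :: "'a \<Rightarrow> 'a \<Rightarrow> bool" and u c :: 'a
  assumes finite_V: "finite V" and sym: "symp E"
    and u_in_V: "u \<in> V" and c_in_V: "c \<in> V" and c_adj_u: "c = u \<or> E c u"
    and only_neighbour: "\<And>x. x \<in> V \<Longrightarrow> E u x \<Longrightarrow> x = c"

lemma one_degenerate_pendant_vertex: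
  assumes "finite V" "symp E" "one_degenerate V E" "V \<noteq> {}"
  obtains u c where "pendant_vertex V E u c"
proof -
  obtain u where u: "u \<in> V" and leaf: "\<forall>a\<in>V. \<forall>b\<in>V. E u a \<longrightarrow> E u b \<longrightarrow> a = b"
    using assms(3,4) unfolding one_degenerate_def by blast
  show thesis
  proof (cases "\<exists>x\<in>V. E u x")
    case True
    then obtain x where x: "x \<in> V" "E u x" by blast
    have "pendant_vertex V E u x"
    proof
      show "x = u \<or> E x u" using x(2) assms(2) by (simp add: sympD)
      show "y = x" if "y \<in> V" "E u y" for y using leaf that x by blast
    qed (use assms(1,2) u x in auto)
    then show thesis by (rule that)
  next
    case False
    have "pendant_vertex V E u u"
      by standard (use assms(1,2) u False in auto)
    then show thesis by (rule that)
  qed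
qed

context pendant_vertex
begin

lemma finite_dominator: "dominates V E R S \<Longrightarrow> finite S"
  unfolding dominates_def using finite_subset[OF _ finite_V] by blast

lemma dominates_swap_pendant:
  assumes "R \<subseteq> V" "u \<notin> R" "dominates V E R S"
  shows "dominates (V - {u}) E R (if u \<in> S then insert c S - {u} else S)"
  unfolding dominates_def
proof (intro conjI ballI)
  show "(if u \<in> S then insert c S - {u} else S) \<subseteq> V - {u}"
    using assms(3) c_in_V unfolding dominates_def by auto
  fix v assume v: "v \<in> R"
  then have "v \<noteq> u" "v \<in> V" using assms(1,2) by auto
  consider "v \<in> S" | x where "x \<in> S" "E x v" using assms(3) v unfolding dominates_def by blast
  then show "v \<in> (if u \<in> S then insert c S - {u} else S) \<or>
      (\<exists>x \<in> (if u \<in> S then insert c S - {u} else S). E x v)"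
  proof cases
    case (2 x)
    show ?thesis
    proof (cases "x = u")
      case True
      then have "v = c" using only_neighbour \<open>v \<in> V\<close> 2 by blast
      then show ?thesis using True 2 \<open>v \<noteq> u\<close> by auto
    qed (use 2 in auto)
  qed (use \<open>v \<noteq> u\<close> in auto)
qed

lemma canonical_within_delete_pendant:
  assumes "R \<subseteq> V" "u \<notin> R" "canonical_within (V - {u}) E R D"
  shows "canonical_within V E R D"
  unfolding canonical_within_def
proof (intro conjI allI impI)
  show "dominates V E R D"
    using assms(3) unfolding canonical_within_def by (blast intro: dominates_mono_vertices)
  fix S assume S: "dominates V E R S"
  define S' where "S' = (if u \<in> S then insert c S - {u} else S)"
  have S': "dominates (V - {u}) E R S'"
    unfolding S'_def using dominates_swap_pendant[OF assms(1,2) S] .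
  have fin: "finite S" using finite_dominator[OF S] .
  have card_S': "card S' \<le> card S"
    unfolding S'_def using fin by (simp add: card_insert_if)
  show "card D \<le> card S"
    using assms(3) S' card_S' unfolding canonical_within_def by force
  have "reconf_within V E R (card S + 1) S S'"
  proof (rule reconf_within_via_superset[OF finite_V S _ _ _])
    show "dominates V E R S'" using S' by (rule dominates_mono_vertices) auto
    show "S \<subseteq> insert c S" "S' \<subseteq> insert c S" unfolding S'_def by auto
    show "insert c S \<subseteq> V" using S c_in_V unfolding dominates_def by auto
    show "card (insert c S) \<le> card S + 1" using fin by (simp add: card_insert_if)
  qed
  moreover have "reconf_within V E R (card S + 1) S' D"
    using assms(3) S' card_S' unfolding canonical_within_def
    by (auto intro: reconf_within_mono)
  ultimately show "reconf_within V E R (card S + 1) S D"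
    by (rule reconf_within_trans)
qed

definition residual_targets :: "'a set \<Rightarrow> 'a set" where
  "residual_targets R = {v \<in> R. v \<noteq> u \<and> v \<noteq> c \<and> \<not> E c v}"

lemma residual_targets_subset: "R \<subseteq> V \<Longrightarrow> residual_targets R \<subseteq> V - {u, c}"
  unfolding residual_targets_def by auto

lemma dominates_insert_centre:
  assumes "dominates (V - {u, c}) E (residual_targets R) T"
  shows "dominates V E R (insert c T)"
  using assms c_in_V c_adj_u unfolding dominates_def residual_targets_def by blast

lemma dominates_delete_pendant_centre:
  assumes "R \<subseteq> V" "dominates V E R S"
  shows "dominates (V - {u, c}) E (residual_targets R) (S - {u, c})"
  unfolding dominates_def
proof (intro conjI ballI)
  show "S - {u, c} \<subseteq> V - {u, c}" using assms(2) unfolding dominates_def by blast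
  fix v assume "v \<in> residual_targets R"
  then have v: "v \<in> R" "v \<in> V" "v \<noteq> u" "v \<noteq> c" "\<not> E c v"
    using assms(1) unfolding residual_targets_def by auto
  then have "x \<noteq> u" if "E x v" for x using only_neighbour that by blast
  then show "v \<in> S - {u, c} \<or> (\<exists>x\<in>S - {u, c}. E x v)"
    using assms(2) v unfolding dominates_def by blast
qed

lemma dominator_meets_pendant_edge:
  assumes "u \<in> R" "dominates V E R S"
  shows "u \<in> S \<or> c \<in> S"
proof -
  have "x = c" if "x \<in> S" "E x u" for x
    using that assms(2) only_neighbour sym unfolding dominates_def by (blast dest: sympD)
  then show ?thesis using assms unfolding dominates_def by blast
qed

lemma card_insert_centre_le:
  assumes "u \<in> R" "dominates V E R S"
  shows "card (insert c (S - {u, c})) \<le> card S"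
proof -
  have "S - {u, c} \<subset> S" using dominator_meets_pendant_edge[OF assms] by blast
  then have "card (S - {u, c}) < card S" using finite_dominator[OF assms(2)] by (rule psubset_card_mono[rotated])
  then show ?thesis using finite_dominator[OF assms(2)] by (simp add: card_insert_if)
qed

lemma reconf_within_insert_centre:
  assumes "reconf_within (V - {u, c}) E (residual_targets R) k A B"
  shows "reconf_within V E R (k + 1) (insert c A) (insert c B)"
  using assms
proof (rule reconf_within_map)
  fix T assume T: "dominates (V - {u, c}) E (residual_targets R) T" "card T \<le> k"
  have "finite T" using T(1) finite_subset[OF _ finite_V] unfolding dominates_def by blast
  then show "dominates V E R (insert c T) \<and> card (insert c T) \<le> k + 1"
    using dominates_insert_centre[OF T(1)] T(2) by (simp add: card_insert_if)
next
  fix X Y assume "dominates (V - {u, c}) E (residual_targets R) X"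
    "dominates (V - {u, c}) E (residual_targets R) Y" "ds_adjacent X Y"
  then show "ds_adjacent (insert c X) (insert c Y)"
    unfolding dominates_def by (intro ds_adjacent_insert_both) auto
qed

lemma canonical_within_delete_pendant_centre:
  assumes "R \<subseteq> V" "u \<in> R" "canonical_within (V - {u, c}) E (residual_targets R) D"
  shows "canonical_within V E R (insert c D)"
  unfolding canonical_within_def
proof (intro conjI allI impI)
  have D: "dominates (V - {u, c}) E (residual_targets R) D"
    using assms(3) unfolding canonical_within_def by blast
  then show "dominates V E R (insert c D)" by (rule dominates_insert_centre)
  fix S assume S: "dominates V E R S"
  define S' where "S' = S - {u, c}"
  have S': "dominates (V - {u, c}) E (residual_targets R) S'"
    unfolding S'_def using dominates_delete_pendant_centre[OF assms(1) S] .
  have c_notin: "c \<notin> D" "c \<notin> S'" using D S' unfolding dominates_def by auto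
  have fin: "finite D" "finite S'"
    using D S' finite_subset[OF _ finite_V] unfolding dominates_def by blast+
  have card_S': "card S' + 1 \<le> card S"
    using card_insert_centre_le[OF assms(2) S] c_notin(2) fin(2) unfolding S'_def by simp
  show "card (insert c D) \<le> card S"
    using assms(3) S' card_S' c_notin(1) fin(1) unfolding canonical_within_def by force
  have "reconf_within (V - {u, c}) E (residual_targets R) (card S' + 1) S' D"
    using assms(3) S' unfolding canonical_within_def by blast
  then have lifted: "reconf_within V E R (card S + 1) (insert c S') (insert c D)"
    using card_S' by (intro reconf_within_mono[OF reconf_within_insert_centre]) auto
  have "reconf_within V E R (card S + 1) S (insert c S')"
  proof (rule reconf_within_via_superset[OF finite_V S _ _ _])
    show "dominates V E R (insert c S')" using S' by (rule dominates_insert_centre)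
    show "S \<subseteq> insert c S" "insert c S' \<subseteq> insert c S" unfolding S'_def by auto
    show "insert c S \<subseteq> V" using S c_in_V unfolding dominates_def by auto
    show "card (insert c S) \<le> card S + 1" using finite_dominator[OF S] by (simp add: card_insert_if)
  qed
  then show "reconf_within V E R (card S + 1) S (insert c D)"
    using lifted by (rule reconf_within_trans)
qed

end

lemma one_degenerate_canonical_within:
  assumes "finite V" "symp E" "one_degenerate V E" "R \<subseteq> V"
  shows "\<exists>D. canonical_within V E R D"
  using assms
proof (induct "card V" arbitrary: V R rule: less_induct)
  case less
  show ?case
  proof (cases "V = {}")
    case True
    moreover have "R = {}" using True less.prems(4) by blast
    ultimately show ?thesis using canonical_within_empty by auto
  next
    case False
    then obtain u c where "pendant_vertex V E u c"
      using one_degenerate_pendant_vertex less.prems(1-3) by blast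
    then interpret pendant_vertex V E u c .
    have smaller: "card W < card V \<and> finite W \<and> one_degenerate W E" if "W \<subseteq> V" "u \<notin> W" for W
    proof (intro conjI)
      have "W \<subset> V" using that u_in_V by blast
      then show "card W < card V" using finite_V by (rule psubset_card_mono[rotated])
      show "finite W" using that(1) finite_V by (rule finite_subset)
      show "one_degenerate W E" using less.prems(3) that(1) by (rule one_degenerate_subset)
    qed
    show ?thesis
    proof (cases "u \<in> R")
      case False
      then have "R \<subseteq> V - {u}" using less.prems(4) by blast
      then obtain D where "canonical_within (V - {u}) E R D"
        using less.hyps smaller[of "V - {u}"] less.prems(2) by blast
      then show ?thesis using canonical_within_delete_pendant less.prems(4) False by blast
    next
      case True
      obtain D where "canonical_within (V - {u, c}) E (residual_targets R) D"
        using less.hyps smaller[of "V - {u, c}"] less.prems(2) residual_targets_subset[OF less.prems(4)]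
        by blast
      then show ?thesis using canonical_within_delete_pendant_centre less.prems(4) True by blast
    qed
  qed
qed

lemma is_walk_Cons:
  assumes "x \<in> V" "E x (hd p)" "is_walk V E p"
  shows "is_walk V E (x # p)"
  unfolding is_walk_def
proof (intro conjI allI impI)
  show "x # p \<noteq> []" "set (x # p) \<subseteq> V" using assms unfolding is_walk_def by auto
  fix i assume i: "Suc i < length (x # p)"
  show "E ((x # p) ! i) ((x # p) ! Suc i)"
  proof (cases i)
    case 0
    then show ?thesis using assms(2,3) unfolding is_walk_def by (simp add: hd_conv_nth)
  next
    case (Suc j)
    then show ?thesis using assms(3) i unfolding is_walk_def by auto
  qed
qed

lemma is_walk_take: "is_walk V E p \<Longrightarrow> 0 < n \<Longrightarrow> is_walk V E (take n p)"
  unfolding is_walk_def by (auto dest: in_set_takeD)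

lemma is_walk_mono: "is_walk W E p \<Longrightarrow> W \<subseteq> V \<Longrightarrow> is_walk V E p"
  unfolding is_walk_def by blast

lemma distinct_walk_closing_edge_is_cycle:
  assumes "is_walk V E p" "distinct p" "2 \<le> j" "j < length p" "E (p ! j) (hd p)"
  shows "is_cycle V E (take (Suc j) p)"
  unfolding is_cycle_def
proof (intro conjI)
  show "3 \<le> length (take (Suc j) p)" "distinct (take (Suc j) p)" using assms(2-4) by auto
  show "is_walk V E (take (Suc j) p)" using assms(1) by (rule is_walk_take) simp
  have "p \<noteq> []" using assms(4) by auto
  then show "E (last (take (Suc j) p)) (hd (take (Suc j) p))"
    using assms(4,5) by (simp add: last_conv_nth)
qed

lemma longest_distinct_walk_exists:
  assumes "finite W" "W \<noteq> {}"
  obtains p where "distinct p" "is_walk W E p"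
    "\<And>q. distinct q \<Longrightarrow> is_walk W E q \<Longrightarrow> length q \<le> length p"
proof -
  define P where "P p \<longleftrightarrow> distinct p \<and> is_walk W E p" for p
  obtain w where "w \<in> W" using assms(2) by blast
  then have "P [w]" unfolding P_def is_walk_def by simp
  moreover have "length p < card W + 1" if "P p" for p
  proof -
    have "distinct p" "set p \<subseteq> W" using that unfolding P_def is_walk_def by auto
    then have "length p \<le> card W" using card_mono[OF assms(1)] distinct_card by metis
    then show ?thesis by simp
  qed
  ultimately obtain p where "P p" "\<And>q. P q \<Longrightarrow> length q \<le> length p"
    using ex_has_greatest_nat[of P "[w]" length "card W + 1"] by blast
  then show thesis using that unfolding P_def by blast
qed

lemma acyclic_one_degenerate:
  assumes "simple_graph V E" "\<nexists>c. is_cycle V E c"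
  shows "one_degenerate V E"
  unfolding one_degenerate_def
proof (intro allI impI)
  fix W assume W: "W \<subseteq> V" "W \<noteq> {}"
  have "finite W" using assms(1) W(1) finite_subset unfolding simple_graph_def by blast
  then obtain p where p: "distinct p" "is_walk W E p"
    and longest: "\<And>q. distinct q \<Longrightarrow> is_walk W E q \<Longrightarrow> length q \<le> length p"
    using longest_distinct_walk_exists W(2) by blast
  have "p \<noteq> []" using p(2) unfolding is_walk_def by simp
  have "hd p \<in> W" using p(2) \<open>p \<noteq> []\<close> unfolding is_walk_def by auto
  text \<open>Every neighbour of the end of a longest path is the next vertex on it: any other
    would extend the path or close a cycle.\<close>
  moreover have "2 \<le> length p \<and> x = p ! 1" if x: "x \<in> W" "E (hd p) x" for x
  proof (cases "x \<in> set p")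
    case False
    have "is_walk W E (x # p)"
      using is_walk_Cons[OF x(1) _ p(2)] x(2) assms(1) unfolding simple_graph_def by blast
    then show ?thesis using longest[of "x # p"] False p(1) by simp
  next
    case True
    then obtain j where j: "j < length p" "p ! j = x" by (auto simp: in_set_conv_nth)
    have "j \<noteq> 0"
    proof
      assume "j = 0"
      then have "E x x" using j x(2) \<open>p \<noteq> []\<close> by (simp add: hd_conv_nth)
      then show False using assms(1) unfolding simple_graph_def by blast
    qed
    moreover have "\<not> 2 \<le> j"
    proof
      assume "2 \<le> j"
      then have "is_cycle W E (take (Suc j) p)"
        using distinct_walk_closing_edge_is_cycle[OF p(2,1) _ j(1)] j(2) x(2) assms(1)
        unfolding simple_graph_def by blast
      then show False using assms(2) is_walk_mono[OF _ W(1)] unfolding is_cycle_def by blast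
    qed
    ultimately have "j = 1" by linarith
    then show ?thesis using j by auto
  qed
  ultimately show "\<exists>u\<in>W. \<forall>a\<in>W. \<forall>b\<in>W. E u a \<longrightarrow> E u b \<longrightarrow> a = b" by blast
qed

lemma reconf_within_imp_reconf: "reconf_within V E V k A B \<Longrightarrow> reconf V E k A B"
proof (induction rule: reconf_within.induct)
  case (refl A)
  then show ?case unfolding reconf_def by (intro exI[of _ "[A]"]) (simp add: dominates_self_iff)
next
  case (step A B C)
  then obtain Ds where Ds: "Ds \<noteq> []" "hd Ds = A" "last Ds = B"
     "\<forall>D\<in>set Ds. dominating_set V E D \<and> card D \<le> k"
     "\<forall>i. Suc i < length Ds \<longrightarrow> ds_adjacent (Ds ! i) (Ds ! Suc i)"
    unfolding reconf_def by blast
  have "ds_adjacent ((Ds @ [C]) ! i) ((Ds @ [C]) ! Suc i)" if "Suc i < length (Ds @ [C])" for i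
  proof (cases "Suc i < length Ds")
    case True
    then show ?thesis using Ds(5) by (simp add: nth_append)
  next
    case False
    then have "i = length Ds - 1" "Suc i = length Ds" using that by auto
    then show ?thesis using Ds(1,3) step.hyps(2) by (simp add: nth_append last_conv_nth)
  qed
  then show ?case unfolding reconf_def using Ds step.hyps(3,4)
    by (intro exI[of _ "Ds @ [C]"]) (auto simp: dominates_self_iff)
qed

theorem lemma7:
  fixes V :: "'a set" and E :: "'a \<Rightarrow> 'a \<Rightarrow> bool"
  assumes "is_tree V E"
  shows "\<exists>D. canonical_dominating_set V E D"
proof -
  have graph: "simple_graph V E" and acyclic: "\<nexists>c. is_cycle V E c"
    using assms unfolding is_tree_def by auto
  then have "finite V" "symp E" unfolding simple_graph_def by (auto intro: sympI)
  then obtain D where "canonical_within V E V D"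
    using one_degenerate_canonical_within acyclic_one_degenerate[OF graph acyclic] by blast
  then have "canonical_dominating_set V E D"
    unfolding canonical_dominating_set_def min_dominating_set_def canonical_within_def
      dominates_self_iff
    using reconf_within_imp_reconf by blast
  then show ?thesis by blast
qed

end
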